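(* Let $r\ge3$ and $q\ge4$, and let $K^{2,q}(K_r)$ be the graph obtained from the complete graph $K_r$ by deleting each edge $uv$ and adding $q$ new vertices each adjacent to exactly $u$ and $v$. Then $\gamma_P(K^{2,q}(K_r))=r-1$, $\overline{\gamma_P}(K^{2,q}(K_r))\ge q\frac{r(r-1)}{2}-(r-1)$, $\underline{pd_0}(K^{2,q}(K_r))=r$, and $pd_0(K^{2,q}(K_r))\ge q\frac{r(r-1)}{2}-(r-1)+1>r$.
   Context: All graphs are finite, simple, undirected. Standard color change rule: with a set $B$ of blue vertices and $W=V(G)\setminus B$ white, a blue vertex $u$ may color a white vertex $w$ blue if $N(u)\cap W=\{w\}$. $S$ is a standard zero forcing set if, starting with exactly $S$ blue and applying the rule until no change is possible, all vertices become blue. $S\subseteq V(G)$ is a power dominating set if $N[S]$ (closed neighborhood) is a standard zero forcing set. $\gamma_P(G)$ is the minimum cardinality of a power dominating set and $\overline{\gamma_P}(G)$ the maximum cardinality of an inclusion-minimal power dominating set. The power domination TAR graph $\mathfrak{P}(G)$ has as vertices the power dominating sets, with $S_1S_2$ an edge iff $|S_1\ominus S_2|=1$; $\mathfrak{P}_k(G)$ is its subgraph induced by power dominating sets of size at most $k$. $pd_0(G)$ is the least $k_0$ with $\mathfrak{P}_k(G)$ connected for all $k\ge k_0$, and $\underline{pd_0}(G)$ is the least $k$ with $\mathfrak{P}_k(G)$ connected. *)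

theory Defs
  imports Main
begin

text \<open>A finite simple graph is given by a vertex set V and an adjacency
relation E (assumed symmetric and irreflexive on V where relevant).\<close>

definition open_nbhd :: "'a set \<Rightarrow> ('a \<Rightarrow> 'a \<Rightarrow> bool) \<Rightarrow> 'a \<Rightarrow> 'a set" where
  "open_nbhd V E u = {x \<in> V. E u x}"

definition closed_nbhd_set :: "'a set \<Rightarrow> ('a \<Rightarrow> 'a \<Rightarrow> bool) \<Rightarrow> 'a set \<Rightarrow> 'a set" where
  "closed_nbhd_set V E S = S \<union> {v \<in> V. \<exists>u\<in>S. E u v}"

definition force_step :: "'a set \<Rightarrow> ('a \<Rightarrow> 'a \<Rightarrow> bool) \<Rightarrow> 'a set \<Rightarrow> 'a set \<Rightarrow> bool" where
  "force_step V E B B' \<longleftrightarrow>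
     (\<exists>u\<in>B. \<exists>w. open_nbhd V E u - B = {w} \<and> B' = insert w B)"

definition zero_forcing_set :: "'a set \<Rightarrow> ('a \<Rightarrow> 'a \<Rightarrow> bool) \<Rightarrow> 'a set \<Rightarrow> bool" where
  "zero_forcing_set V E S \<longleftrightarrow> S \<subseteq> V \<and> (force_step V E)\<^sup>*\<^sup>* S V"

definition power_dominating_set :: "'a set \<Rightarrow> ('a \<Rightarrow> 'a \<Rightarrow> bool) \<Rightarrow> 'a set \<Rightarrow> bool" where
  "power_dominating_set V E S \<longleftrightarrow> S \<subseteq> V \<and> zero_forcing_set V E (closed_nbhd_set V E S)"

definition power_domination_number :: "'a set \<Rightarrow> ('a \<Rightarrow> 'a \<Rightarrow> bool) \<Rightarrow> nat" where
  "power_domination_number V E = Min (card ` {S. power_dominating_set V E S})"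

definition minimal_pds :: "'a set \<Rightarrow> ('a \<Rightarrow> 'a \<Rightarrow> bool) \<Rightarrow> 'a set \<Rightarrow> bool" where
  "minimal_pds V E S \<longleftrightarrow> power_dominating_set V E S \<and>
     (\<forall>T. T \<subset> S \<longrightarrow> \<not> power_dominating_set V E T)"

definition upper_power_domination_number :: "'a set \<Rightarrow> ('a \<Rightarrow> 'a \<Rightarrow> bool) \<Rightarrow> nat" where
  "upper_power_domination_number V E = Max (card ` {S. minimal_pds V E S})"

text \<open>Vertex set of the truncated TAR graph P_k(G): power dominating sets of size at most k.
Two such sets are adjacent iff their symmetric difference has exactly one element.\<close>
definition tar_vertices :: "'a set \<Rightarrow> ('a \<Rightarrow> 'a \<Rightarrow> bool) \<Rightarrow> nat \<Rightarrow> 'a set set" where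
  "tar_vertices V E k = {S. power_dominating_set V E S \<and> card S \<le> k}"

definition tar_adj :: "'a set \<Rightarrow> 'a set \<Rightarrow> bool" where
  "tar_adj S1 S2 \<longleftrightarrow> card ((S1 - S2) \<union> (S2 - S1)) = 1"

definition connected_on :: "'b set \<Rightarrow> ('b \<Rightarrow> 'b \<Rightarrow> bool) \<Rightarrow> bool" where
  "connected_on X R \<longleftrightarrow> X \<noteq> {} \<and>
     (\<forall>x\<in>X. \<forall>y\<in>X. (\<lambda>a b. a \<in> X \<and> b \<in> X \<and> R a b)\<^sup>*\<^sup>* x y)"

definition tar_connected :: "'a set \<Rightarrow> ('a \<Rightarrow> 'a \<Rightarrow> bool) \<Rightarrow> nat \<Rightarrow> bool" where
  "tar_connected V E k \<longleftrightarrow> connected_on (tar_vertices V E k) tar_adj"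

definition pd0 :: "'a set \<Rightarrow> ('a \<Rightarrow> 'a \<Rightarrow> bool) \<Rightarrow> nat" where
  "pd0 V E = (LEAST k0. \<forall>k\<ge>k0. tar_connected V E k)"

definition lower_pd0 :: "'a set \<Rightarrow> ('a \<Rightarrow> 'a \<Rightarrow> bool) \<Rightarrow> nat" where
  "lower_pd0 V E = (LEAST k. tar_connected V E k)"

text \<open>The graph K^{2,q}(K_r): original vertices Inl i (i < r); for every edge ij (i < j < r)
of K_r, the edge is deleted and q new vertices Inr (i,j,t) (t < q) adjacent exactly to
Inl i and Inl j are added.\<close>
definition kqr_V :: "nat \<Rightarrow> nat \<Rightarrow> (nat + nat \<times> nat \<times> nat) set" where
  "kqr_V r q = Inl ` {..<r} \<union> {Inr (i, j, t) | i j t. i < j \<and> j < r \<and> t < q}"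

definition kqr_E :: "nat \<Rightarrow> nat \<Rightarrow> (nat + nat \<times> nat \<times> nat) \<Rightarrow> (nat + nat \<times> nat \<times> nat) \<Rightarrow> bool" where
  "kqr_E r q x y \<longleftrightarrow>
     (\<exists>i j t. i < j \<and> j < r \<and> t < q \<and>
        ((x = Inr (i, j, t) \<and> (y = Inl i \<or> y = Inl j)) \<or>
         (y = Inr (i, j, t) \<and> (x = Inl i \<or> x = Inl j))))"

end

theory Submission
  imports Defs
begin

text \<open>
  All but one branch vertex, \<open>kqr_branch r - {Inl a}\<close>, power dominate: they observe every
  vertex except \<open>Inl a\<close>, which is then forced by a subdivision vertex of an edge at \<open>a\<close>.
  Conversely, if branch vertices \<open>a \<noteq> b\<close> are both missing from a power dominating set, it
  must contain all but at most one of the \<open>q\<close> twins subdividing \<open>ab\<close>, since two unobserved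
  twins form a fort. Counting, with \<open>q \<ge> 4\<close> a power dominating set of size at most \<open>r\<close>
  contains all but one branch vertex. So the power dominating sets of size \<open>r - 1\<close> are exactly
  these \<open>r\<close> sets, no two adjacent in the TAR graph, while at size \<open>r\<close> all power dominating
  sets are joined through the whole branch set.

  All subdivision vertices except one twin on each edge at branch vertex \<open>0\<close> form a minimal
  power dominating set of size \<open>q r(r-1)/2 - (r-1)\<close>. By minimality it has no neighbour in the
  TAR graph truncated at its own size, which is therefore disconnected.
\<close>

section \<open>Zero forcing, forts and power domination\<close>

lemma open_nbhd_subset: "open_nbhd V E u \<subseteq> V"
  by (auto simp: open_nbhd_def)

lemma closed_nbhd_set_subset: "S \<subseteq> V \<Longrightarrow> closed_nbhd_set V E S \<subseteq> V"
  by (auto simp: closed_nbhd_set_def)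

lemma closed_nbhd_set_mono: "S \<subseteq> S' \<Longrightarrow> closed_nbhd_set V E S \<subseteq> closed_nbhd_set V E S'"
  by (auto simp: closed_nbhd_set_def)

lemma force_steps_to_V_mono:
  assumes "(force_step V E)\<^sup>*\<^sup>* B V" "B \<subseteq> B'" "B' \<subseteq> V"
  shows "(force_step V E)\<^sup>*\<^sup>* B' V"
  using assms
proof (induction arbitrary: B' rule: converse_rtranclp_induct)
  case base
  then have "B' = V" by auto
  then show ?case by simp
next
  case (step B C)
  from step.hyps(1) obtain u w where u: "u \<in> B" "open_nbhd V E u - B = {w}" "C = insert w B"
    unfolding force_step_def by blast
  show ?case
  proof (cases "w \<in> B'")
    case True
    then have "C \<subseteq> B'" using u step.prems by auto
    then show ?thesis using step.IH step.prems by blast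
  next
    case False
    then have "force_step V E B' (insert w B')"
      using u step.prems unfolding force_step_def by blast
    moreover have "(force_step V E)\<^sup>*\<^sup>* (insert w B') V"
      using u step.prems open_nbhd_subset[of V E u] by (intro step.IH) auto
    ultimately show ?thesis by (rule converse_rtranclp_into_rtranclp)
  qed
qed

lemma force_steps_to_V_if_all_forced:
  assumes "finite V" "B \<subseteq> V" "\<forall>w\<in>V - B. \<exists>u\<in>B. open_nbhd V E u - B = {w}"
  shows "(force_step V E)\<^sup>*\<^sup>* B V"
  using assms
proof (induction "card (V - B)" arbitrary: B)
  case 0
  then have "B = V" by auto
  then show ?case by simp
next
  case (Suc n)
  then have "V - B \<noteq> {}" by (metis card.empty nat.distinct(1))
  then obtain w where w: "w \<in> V - B" by blast
  then obtain u where "u \<in> B" "open_nbhd V E u - B = {w}" using Suc.prems(3) by blast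
  then have "force_step V E B (insert w B)" unfolding force_step_def by blast
  moreover have "(force_step V E)\<^sup>*\<^sup>* (insert w B) V"
  proof (rule Suc.hyps(1))
    have "V - insert w B = (V - B) - {w}" by auto
    then show "n = card (V - insert w B)" using Suc.hyps(2) Suc.prems(1) w by simp
    show "insert w B \<subseteq> V" using Suc.prems(2) w by blast
    show "\<forall>w'\<in>V - insert w B. \<exists>u\<in>insert w B. open_nbhd V E u - insert w B = {w'}"
      using Suc.prems(3) by blast
  qed (rule Suc.prems(1))
  ultimately show ?case by (rule converse_rtranclp_into_rtranclp)
qed

definition fort :: "'a set \<Rightarrow> ('a \<Rightarrow> 'a \<Rightarrow> bool) \<Rightarrow> 'a set \<Rightarrow> bool" where
  "fort V E F \<longleftrightarrow> F \<subseteq> V \<and> F \<noteq> {} \<and>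
     (\<forall>u w. u \<notin> F \<longrightarrow> w \<in> F \<longrightarrow> E u w \<longrightarrow> (\<exists>w'\<in>F. w' \<noteq> w \<and> E u w'))"

lemma fort_disjoint_force_steps:
  assumes "fort V E F" "(force_step V E)\<^sup>*\<^sup>* B C" "B \<inter> F = {}"
  shows "C \<inter> F = {}"
  using assms(2,3)
proof (induction rule: rtranclp_induct)
  case (step C D)
  from step.hyps(2) obtain u w where u: "u \<in> C" "open_nbhd V E u - C = {w}" "D = insert w C"
    unfolding force_step_def by blast
  have "w \<notin> F"
  proof
    assume "w \<in> F"
    moreover have "u \<notin> F" "E u w" using u step by (auto simp: open_nbhd_def)
    ultimately obtain w' where "w' \<in> F" "w' \<noteq> w" "E u w'"
      using assms(1) unfolding fort_def by blast
    then have "w' \<in> open_nbhd V E u - C"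
      using assms(1) step by (auto simp: open_nbhd_def fort_def)
    with u(2) \<open>w' \<noteq> w\<close> show False by blast
  qed
  then show ?case using step u(3) by auto
qed simp

lemma not_power_dominating_set_if_fort:
  assumes "fort V E F" "closed_nbhd_set V E S \<inter> F = {}"
  shows "\<not> power_dominating_set V E S"
proof
  assume "power_dominating_set V E S"
  then have "V \<inter> F = {}"
    using fort_disjoint_force_steps[OF assms(1) _ assms(2)]
    unfolding power_dominating_set_def zero_forcing_set_def by blast
  with assms(1) show False unfolding fort_def by blast
qed

lemma power_dominating_setI:
  assumes "finite V" "S \<subseteq> V" "B \<subseteq> closed_nbhd_set V E S" "B \<subseteq> V"
    "\<forall>w\<in>V - B. \<exists>u\<in>B. open_nbhd V E u - B = {w}"
  shows "power_dominating_set V E S"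
  using force_steps_to_V_mono[OF force_steps_to_V_if_all_forced[OF assms(1,4,5)] assms(3)]
    closed_nbhd_set_subset[OF assms(2)] assms(2)
  unfolding power_dominating_set_def zero_forcing_set_def by blast

lemma power_dominating_set_mono:
  assumes "power_dominating_set V E S" "S \<subseteq> S'" "S' \<subseteq> V"
  shows "power_dominating_set V E S'"
  using assms force_steps_to_V_mono[of V E "closed_nbhd_set V E S" "closed_nbhd_set V E S'"]
    closed_nbhd_set_subset[of S' V E] closed_nbhd_set_mono[of S S' V E]
  unfolding power_dominating_set_def zero_forcing_set_def by auto

lemma power_dominating_set_subset: "power_dominating_set V E S \<Longrightarrow> S \<subseteq> V"
  by (simp add: power_dominating_set_def)

lemma power_dominating_set_univ: "power_dominating_set V E V"
proof -
  have "closed_nbhd_set V E V = V" by (auto simp: closed_nbhd_set_def)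
  then show ?thesis unfolding power_dominating_set_def zero_forcing_set_def by auto
qed

lemma power_domination_number_eqI:
  assumes "finite V" "power_dominating_set V E S"
    "\<And>T. power_dominating_set V E T \<Longrightarrow> card S \<le> card T"
  shows "power_domination_number V E = card S"
  unfolding power_domination_number_def
proof (rule Min_eqI)
  have "{S. power_dominating_set V E S} \<subseteq> Pow V" using power_dominating_set_subset by blast
  then show "finite (card ` {S. power_dominating_set V E S})"
    using assms(1) by (meson finite_Pow_iff finite_imageI finite_subset)
qed (use assms(2,3) in auto)

lemma card_le_upper_power_domination_number:
  assumes "finite V" "minimal_pds V E S"
  shows "card S \<le> upper_power_domination_number V E"
  unfolding upper_power_domination_number_def
proof (rule Max_ge)
  have "{S. minimal_pds V E S} \<subseteq> Pow V"
    by (auto simp: minimal_pds_def power_dominating_set_def)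
  then show "finite (card ` {S. minimal_pds V E S})"
    using assms(1) by (meson finite_Pow_iff finite_imageI finite_subset)
qed (use assms(2) in auto)

section \<open>Connectivity of the TAR graph\<close>

lemma symp_tar_adj: "symp tar_adj"
  by (rule sympI) (simp add: tar_adj_def Un_commute)

lemma tar_adj_insert: "y \<notin> S \<Longrightarrow> tar_adj S (insert y S)"
proof -
  assume "y \<notin> S"
  then have "(S - insert y S) \<union> (insert y S - S) = {y}" by auto
  then show ?thesis unfolding tar_adj_def by simp
qed

lemma connected_onI_hub:
  assumes "symp R" "c \<in> X" "\<And>x. x \<in> X \<Longrightarrow> (\<lambda>a b. a \<in> X \<and> b \<in> X \<and> R a b)\<^sup>*\<^sup>* x c"
  shows "connected_on X R"
  unfolding connected_on_def
proof (intro conjI ballI)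
  let ?R = "\<lambda>a b. a \<in> X \<and> b \<in> X \<and> R a b"
  have "symp ?R" using assms(1) by (simp add: symp_def)
  then have sym: "symp ?R\<^sup>*\<^sup>*" by (rule symp_rtranclp)
  fix x y assume "x \<in> X" "y \<in> X"
  then have "?R\<^sup>*\<^sup>* x c" "?R\<^sup>*\<^sup>* c y" using assms(3) sympD[OF sym] by blast+
  then show "?R\<^sup>*\<^sup>* x y" by (rule rtranclp_trans)
qed (use assms(2) in blast)

lemma connected_on_isolated_eq:
  assumes "connected_on X R" "x \<in> X" "y \<in> X" "\<forall>z\<in>X. \<not> R x z"
  shows "x = y"
proof -
  have "(\<lambda>a b. a \<in> X \<and> b \<in> X \<and> R a b)\<^sup>*\<^sup>* x y"
    using assms(1-3) unfolding connected_on_def by blast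
  then show ?thesis using assms(4) by (cases rule: converse_rtranclpE) auto
qed

lemma tar_connected_if_card_le:
  assumes "finite V" "card V \<le> k"
  shows "tar_connected V E k"
proof -
  let ?X = "tar_vertices V E k"
  have in_X: "S \<in> ?X" if "power_dominating_set V E S" for S
    using that card_mono[OF assms(1) power_dominating_set_subset[OF that]] assms(2)
    by (simp add: tar_vertices_def)
  let ?R = "\<lambda>a b. a \<in> ?X \<and> b \<in> ?X \<and> tar_adj a b"
  have reach_V: "?R\<^sup>*\<^sup>* S V" if "power_dominating_set V E S" for S
    using that
  proof (induction "card (V - S)" arbitrary: S)
    case 0
    then have "S = V" using assms(1) power_dominating_set_subset[of V E S] by auto
    then show ?case by simp
  next
    case (Suc n)
    then have "V - S \<noteq> {}" by (metis card.empty nat.distinct(1))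
    then obtain y where y: "y \<in> V - S" by blast
    have S': "power_dominating_set V E (insert y S)"
      using Suc.prems y power_dominating_set_mono power_dominating_set_subset by blast
    have "V - insert y S = (V - S) - {y}" by auto
    then have "n = card (V - insert y S)" using Suc.hyps(2) assms(1) y by simp
    then have "?R\<^sup>*\<^sup>* (insert y S) V" using S' by (rule Suc.hyps(1))
    moreover have "?R S (insert y S)"
      using in_X[OF Suc.prems] in_X[OF S'] tar_adj_insert[of y S] y by blast
    ultimately show ?case by (rule converse_rtranclp_into_rtranclp[rotated])
  qed
  show ?thesis unfolding tar_connected_def
  proof (rule connected_onI_hub[OF symp_tar_adj])
    show "V \<in> ?X" using in_X power_dominating_set_univ by blast
  qed (intro reach_V, simp add: tar_vertices_def)
qed

lemma not_tar_connected_if_minimal_pds: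
  assumes "finite V" "minimal_pds V E S" "power_dominating_set V E T" "card T \<le> card S" "T \<noteq> S"
  shows "\<not> tar_connected V E (card S)"
proof
  let ?X = "tar_vertices V E (card S)"
  assume connected: "tar_connected V E (card S)"
  have S: "S \<in> ?X" using assms(2) by (simp add: tar_vertices_def minimal_pds_def)
  have T: "T \<in> ?X" using assms(3,4) by (simp add: tar_vertices_def)
  have isolated: "\<not> tar_adj S S'" if "S' \<in> ?X" for S'
  proof
    assume "tar_adj S S'"
    then obtain y where y: "(S - S') \<union> (S' - S) = {y}"
      unfolding tar_adj_def by (meson card_1_singletonE)
    have y_diff: "S - S' \<subseteq> {y}" "S' - S \<subseteq> {y}" "y \<in> S - S' \<or> y \<in> S' - S"
      using y by auto
    show False
    proof (cases "y \<in> S")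
      case True
      then have "S' \<subset> S" using y_diff by auto
      then show False using assms(2) that unfolding minimal_pds_def tar_vertices_def by blast
    next
      case False
      then have "S' = insert y S" using y_diff by auto
      moreover have "finite S"
        using assms(1,2) by (meson finite_subset minimal_pds_def power_dominating_set_subset)
      ultimately show False using that False by (simp add: tar_vertices_def)
    qed
  qed
  have "S = T"
    using connected_on_isolated_eq[OF connected[unfolded tar_connected_def] S T] isolated by blast
  with assms(5) show False by simp
qed

lemma pd0_gt_if_not_tar_connected:
  assumes "finite V" "\<not> tar_connected V E N"
  shows "N < pd0 V E"
proof -
  have "\<forall>k\<ge>card V. tar_connected V E k" using tar_connected_if_card_le[OF assms(1)] by blast
  then have "\<forall>k\<ge>pd0 V E. tar_connected V E k" unfolding pd0_def by (rule LeastI)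
  then show ?thesis using assms(2) by (meson not_le)
qed

section \<open>The graph K^{2,q}(K_r)\<close>

lemma kqr_E_Inr_left [simp]:
  "kqr_E r q (Inr (i, j, t)) y \<longleftrightarrow> i < j \<and> j < r \<and> t < q \<and> (y = Inl i \<or> y = Inl j)"
  by (auto simp: kqr_E_def)

lemma kqr_E_Inr_right [simp]:
  "kqr_E r q y (Inr (i, j, t)) \<longleftrightarrow> i < j \<and> j < r \<and> t < q \<and> (y = Inl i \<or> y = Inl j)"
  by (auto simp: kqr_E_def)


lemma kqr_V_iff [simp]:
  "Inl a \<in> kqr_V r q \<longleftrightarrow> a < r"
  "Inr (i, j, t) \<in> kqr_V r q \<longleftrightarrow> i < j \<and> j < r \<and> t < q"
  by (auto simp: kqr_V_def)

lemma finite_kqr_V: "finite (kqr_V r q)"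
proof (rule finite_subset)
  show "kqr_V r q \<subseteq> Inl ` {..<r} \<union> Inr ` ({..<r} \<times> {..<r} \<times> {..<q})"
    by (auto simp: kqr_V_def)
qed simp

lemma finite_pds_kqr: "power_dominating_set (kqr_V r q) (kqr_E r q) S \<Longrightarrow> finite S"
  by (rule finite_subset[OF power_dominating_set_subset finite_kqr_V])

lemma Inr_in_closed_nbhd_set_kqr_iff:
  "Inr (i, j, t) \<in> closed_nbhd_set (kqr_V r q) (kqr_E r q) S \<longleftrightarrow>
     Inr (i, j, t) \<in> S \<or> (i < j \<and> j < r \<and> t < q \<and> (Inl i \<in> S \<or> Inl j \<in> S))"
  by (auto simp: closed_nbhd_set_def)

definition kqr_branch :: "nat \<Rightarrow> (nat + nat \<times> nat \<times> nat) set" where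
  "kqr_branch r = Inl ` {..<r}"

definition kqr_subdiv :: "nat \<Rightarrow> nat \<Rightarrow> (nat + nat \<times> nat \<times> nat) set" where
  "kqr_subdiv r q = {Inr (i, j, t) | i j t. i < j \<and> j < r \<and> t < q}"

lemma kqr_V_eq: "kqr_V r q = kqr_branch r \<union> kqr_subdiv r q"
  by (simp add: kqr_V_def kqr_branch_def kqr_subdiv_def)

lemma kqr_subdiv_iff [simp]:
  "Inl c \<notin> kqr_subdiv r q"
  "Inr (i, j, t) \<in> kqr_subdiv r q \<longleftrightarrow> i < j \<and> j < r \<and> t < q"
  by (auto simp: kqr_subdiv_def)

lemma card_kqr_branch_minus: "a < r \<Longrightarrow> card (kqr_branch r - {Inl a}) = r - 1"
  by (simp add: kqr_branch_def card_image)

lemma kqr_branch_subset: "kqr_branch r \<subseteq> kqr_V r q"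
  by (auto simp: kqr_branch_def)

lemma power_dominating_set_kqr_branch_minus:
  assumes "2 \<le> r" "1 \<le> q" "a < r"
  shows "power_dominating_set (kqr_V r q) (kqr_E r q) (kqr_branch r - {Inl a})"
proof (rule power_dominating_setI[where B = "kqr_V r q - {Inl a}"])
  let ?S = "kqr_branch r - {Inl a}"
  show "kqr_V r q - {Inl a} \<subseteq> closed_nbhd_set (kqr_V r q) (kqr_E r q) ?S"
  proof
    fix x assume x: "x \<in> kqr_V r q - {Inl a}"
    show "x \<in> closed_nbhd_set (kqr_V r q) (kqr_E r q) ?S"
    proof (cases x)
      case (Inl c)
      then show ?thesis using x by (auto simp: closed_nbhd_set_def kqr_branch_def)
    next
      case (Inr p)
      with x obtain i j t where "x = Inr (i, j, t)" "i < j" "j < r" "t < q"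
        by (cases p) auto
      then show ?thesis
        by (simp add: Inr_in_closed_nbhd_set_kqr_iff kqr_branch_def)
    qed
  qed
  define b where "b = (if a = 0 then 1 else 0 :: nat)"
  have b: "b < r" "b \<noteq> a" using assms by (auto simp: b_def)
  \<comment> \<open>the last white vertex \<open>Inl a\<close> is forced by a subdivision vertex of the edge \<open>ab\<close>\<close>
  let ?u = "Inr (min a b, max a b, 0) :: nat + nat \<times> nat \<times> nat"
  have "?u \<in> kqr_V r q - {Inl a}" "open_nbhd (kqr_V r q) (kqr_E r q) ?u - (kqr_V r q - {Inl a}) = {Inl a}"
    using assms b by (auto simp: open_nbhd_def min_def max_def)
  then show "\<forall>w\<in>kqr_V r q - (kqr_V r q - {Inl a}).
      \<exists>u\<in>kqr_V r q - {Inl a}. open_nbhd (kqr_V r q) (kqr_E r q) u - (kqr_V r q - {Inl a}) = {w}"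
    by blast
qed (use finite_kqr_V kqr_branch_subset[of r q] in auto)

definition kqr_twins :: "nat \<Rightarrow> nat \<Rightarrow> nat \<Rightarrow> (nat + nat \<times> nat \<times> nat) set" where
  "kqr_twins q a b = (\<lambda>t. Inr (min a b, max a b, t)) ` {..<q}"

lemma card_kqr_twins: "card (kqr_twins q a b) = q"
  unfolding kqr_twins_def by (subst card_image) (auto simp: inj_on_def)

lemma card_kqr_twins_minus_pds_le_1:
  assumes pds: "power_dominating_set (kqr_V r q) (kqr_E r q) S"
    and "a < r" "b < r" "a \<noteq> b" "Inl a \<notin> S" "Inl b \<notin> S"
  shows "card (kqr_twins q a b - S) \<le> 1"
proof -
  let ?i = "min a b" and ?j = "max a b"
  have ij: "?i < ?j" "?j < r" "Inl ?i \<notin> S" "Inl ?j \<notin> S"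
    using assms by (auto simp: min_def max_def)
  have "x = y" if "x \<in> kqr_twins q a b - S" "y \<in> kqr_twins q a b - S" for x y
  proof (rule ccontr)
    assume "x \<noteq> y"
    with that obtain t1 t2 where t: "t1 < q" "t2 < q" "t1 \<noteq> t2"
      "Inr (?i, ?j, t1) \<notin> S" "Inr (?i, ?j, t2) \<notin> S"
      by (auto simp: kqr_twins_def)
    \<comment> \<open>both branch neighbours of two twins see both of them\<close>
    let ?F = "{Inr (?i, ?j, t1), Inr (?i, ?j, t2)}"
    have "fort (kqr_V r q) (kqr_E r q) ?F"
      using ij t by (auto simp: fort_def)
    moreover have "closed_nbhd_set (kqr_V r q) (kqr_E r q) S \<inter> ?F = {}"
      using ij t by (auto simp: Inr_in_closed_nbhd_set_kqr_iff)
    ultimately show False using pds not_power_dominating_set_if_fort by blast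
  qed
  then show ?thesis
    using card_le_Suc0_iff_eq[of "kqr_twins q a b - S"] by (simp add: kqr_twins_def)
qed

lemma card_pds_kqr_ge_missing_branch:
  assumes "4 \<le> q" and pds: "power_dominating_set (kqr_V r q) (kqr_E r q) S"
    and M: "M \<subseteq> {..<r}" "a \<in> M" "\<forall>c\<in>M. Inl c \<notin> S" "Inl ` ({..<r} - M) \<subseteq> S"
  shows "r + 2 * card M \<le> card S + 3"
proof -
  have fin: "finite M" "finite S"
    using finite_subset[OF M(1)] finite_pds_kqr[OF pds] by auto
  \<comment> \<open>\<open>S\<close> contains at least \<open>q - 1 \<ge> 3\<close> twins on each edge from \<open>a\<close> to another vertex of \<open>M\<close>\<close>
  define P where "P c = kqr_twins q a c \<inter> S" for c
  have card_P: "3 \<le> card (P c)" if "c \<in> M - {a}" for c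
  proof -
    have "card (kqr_twins q a c - S) \<le> 1"
      using card_kqr_twins_minus_pds_le_1[OF pds] M that by auto
    moreover have "card (kqr_twins q a c) = card (P c) + card (kqr_twins q a c - S)"
      using card_Int_Diff[of "kqr_twins q a c" S] by (simp add: P_def kqr_twins_def)
    ultimately show ?thesis using \<open>4 \<le> q\<close> card_kqr_twins[of q a c] by linarith
  qed
  have disjoint: "P c \<inter> P c' = {}" if "c \<in> M - {a}" "c' \<in> M - {a}" "c \<noteq> c'" for c c'
    using that by (auto simp: P_def kqr_twins_def min_def max_def split: if_splits)
  have "3 * card (M - {a}) \<le> (\<Sum>c\<in>M - {a}. card (P c))"
    using sum_bounded_below[of "M - {a}" 3 "\<lambda>c. card (P c)"] card_P by (simp add: mult.commute)
  also have "\<dots> = card (\<Union>c\<in>M - {a}. P c)"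
    using fin disjoint by (intro card_UN_disjoint[symmetric]) (auto simp: P_def)
  finally have twins: "3 * (card M - 1) \<le> card (\<Union>c\<in>M - {a}. P c)"
    using M(2) fin by simp
  have branch: "card (Inl ` ({..<r} - M) :: (nat + nat \<times> nat \<times> nat) set) = r - card M"
    using fin M(1) by (simp add: card_image card_Diff_subset)
  have "card (Inl ` ({..<r} - M) :: (nat + nat \<times> nat \<times> nat) set) + card (\<Union>c\<in>M - {a}. P c)
      = card (Inl ` ({..<r} - M) \<union> (\<Union>c\<in>M - {a}. P c))"
    using fin by (intro card_Un_disjoint[symmetric]) (auto simp: P_def kqr_twins_def)
  also have "\<dots> \<le> card S"
    using fin M(4) by (intro card_mono) (auto simp: P_def)
  finally show ?thesis
    using twins branch card_mono[OF finite_lessThan M(1)] M(2) fin by (cases "card M") auto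
qed

lemma pds_kqr_contains_branch_minus:
  assumes "1 \<le> r" "4 \<le> q" and pds: "power_dominating_set (kqr_V r q) (kqr_E r q) S"
    and "card S \<le> r"
  shows "\<exists>a<r. kqr_branch r - {Inl a} \<subseteq> S"
proof -
  define M where "M = {c. c < r \<and> Inl c \<notin> S}"
  show ?thesis
  proof (cases "M = {}")
    case True
    then have "kqr_branch r - {Inl 0} \<subseteq> S" by (auto simp: M_def kqr_branch_def)
    then show ?thesis using assms(1) by (intro exI[where x = 0]) simp
  next
    case False
    then obtain a where a: "a \<in> M" by blast
    have "r + 2 * card M \<le> card S + 3"
      by (rule card_pds_kqr_ge_missing_branch[OF assms(2) pds _ a]) (auto simp: M_def)
    then have "card M \<le> 1" using assms(4) by linarith
    then have "M = {a}"
      using a card_le_Suc0_iff_eq[of M] by (auto simp: M_def)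
    then show ?thesis using a by (auto simp: M_def kqr_branch_def)
  qed
qed

lemma card_pds_kqr_ge:
  assumes "1 \<le> r" "4 \<le> q" "power_dominating_set (kqr_V r q) (kqr_E r q) S"
  shows "r - 1 \<le> card S"
proof (cases "card S \<le> r")
  case True
  then obtain a where a: "a < r" "kqr_branch r - {Inl a} \<subseteq> S"
    using pds_kqr_contains_branch_minus[OF assms] by blast
  then have "card (kqr_branch r - {Inl a}) \<le> card S"
    using finite_pds_kqr[OF assms(3)] by (intro card_mono)
  then show ?thesis using card_kqr_branch_minus[OF a(1)] by simp
qed simp

lemma pds_kqr_eq_branch_minus:
  assumes "1 \<le> r" "4 \<le> q" "power_dominating_set (kqr_V r q) (kqr_E r q) S" "card S \<le> r - 1"
  shows "\<exists>a<r. S = kqr_branch r - {Inl a}"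
proof -
  have "card S \<le> r" using assms(4) by linarith
  then obtain a where a: "a < r" "kqr_branch r - {Inl a} \<subseteq> S"
    using pds_kqr_contains_branch_minus[OF assms(1-3)] by blast
  then have "kqr_branch r - {Inl a} = S"
    using finite_pds_kqr[OF assms(3)] assms(4) card_kqr_branch_minus[OF a(1)]
    by (intro card_seteq) simp_all
  then show ?thesis using a(1) by blast
qed

lemma power_domination_number_kqr:
  assumes "2 \<le> r" "4 \<le> q"
  shows "power_domination_number (kqr_V r q) (kqr_E r q) = r - 1"
proof -
  have "power_domination_number (kqr_V r q) (kqr_E r q) = card (kqr_branch r - {Inl 0})"
  proof (rule power_domination_number_eqI[OF finite_kqr_V])
    show "power_dominating_set (kqr_V r q) (kqr_E r q) (kqr_branch r - {Inl 0})"
      using assms by (intro power_dominating_set_kqr_branch_minus) auto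
    show "card (kqr_branch r - {Inl 0}) \<le> card T"
      if "power_dominating_set (kqr_V r q) (kqr_E r q) T" for T
      using card_pds_kqr_ge[OF _ _ that] card_kqr_branch_minus[of 0 r] assms by simp
  qed
  then show ?thesis using assms card_kqr_branch_minus[of 0 r] by simp
qed

lemma tar_connected_kqr:
  assumes "2 \<le> r" "4 \<le> q"
  shows "tar_connected (kqr_V r q) (kqr_E r q) r"
proof -
  let ?X = "tar_vertices (kqr_V r q) (kqr_E r q) r"
  let ?R = "\<lambda>a b. a \<in> ?X \<and> b \<in> ?X \<and> tar_adj a b"
  have branch_minus: "kqr_branch r - {Inl a} \<in> ?X" if "a < r" for a
    using power_dominating_set_kqr_branch_minus[of r q a] card_kqr_branch_minus[of a r] assms that
    by (simp add: tar_vertices_def)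
  have branch: "kqr_branch r \<in> ?X"
    using power_dominating_set_mono[OF power_dominating_set_kqr_branch_minus[of r q 0] _ kqr_branch_subset]
      assms by (simp add: tar_vertices_def kqr_branch_def card_image)
  have adj_branch: "?R (kqr_branch r - {Inl a}) (kqr_branch r)" if "a < r" for a
  proof -
    have "tar_adj (kqr_branch r - {Inl a}) (insert (Inl a) (kqr_branch r - {Inl a}))"
      by (rule tar_adj_insert) simp
    moreover have "Inl a \<in> kqr_branch r" using that by (simp add: kqr_branch_def)
    ultimately have "tar_adj (kqr_branch r - {Inl a}) (kqr_branch r)"
      by (simp only: insert_Diff)
    then show ?thesis using branch_minus[OF that] branch by blast
  qed
  show ?thesis unfolding tar_connected_def
  proof (rule connected_onI_hub[OF symp_tar_adj branch])
    fix S assume S: "S \<in> ?X"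
    then have pds: "power_dominating_set (kqr_V r q) (kqr_E r q) S" and "card S \<le> r"
      by (simp_all add: tar_vertices_def)
    then obtain a where a: "a < r" "kqr_branch r - {Inl a} \<subseteq> S"
      using pds_kqr_contains_branch_minus[OF _ _ pds \<open>card S \<le> r\<close>] assms by auto
    \<comment> \<open>\<open>S\<close> has at most one vertex besides those of \<open>kqr_branch r - {Inl a}\<close>\<close>
    have "?R\<^sup>*\<^sup>* S (kqr_branch r - {Inl a})"
    proof (cases "S = kqr_branch r - {Inl a}")
      case False
      have "finite S" using pds by (rule finite_pds_kqr)
      then have "card (S - (kqr_branch r - {Inl a})) \<le> 1"
        using card_Diff_subset[OF finite_subset[OF a(2) \<open>finite S\<close>] a(2)]
          \<open>card S \<le> r\<close> card_kqr_branch_minus[OF a(1)] by simp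
      moreover have "S - (kqr_branch r - {Inl a}) \<noteq> {}" using False a(2) by blast
      moreover have "0 < card (S - (kqr_branch r - {Inl a}))"
        using \<open>finite S\<close> calculation(2) by (simp add: card_gt_0_iff)
      ultimately have "card (S - (kqr_branch r - {Inl a})) = 1" by linarith
      then obtain y where "S - (kqr_branch r - {Inl a}) = {y}" by (rule card_1_singletonE)
      then have "S = insert y (kqr_branch r - {Inl a})" "y \<notin> kqr_branch r - {Inl a}"
        using a(2) by auto
      then have "tar_adj (kqr_branch r - {Inl a}) S" by (metis tar_adj_insert)
      then have "tar_adj S (kqr_branch r - {Inl a})" by (rule sympD[OF symp_tar_adj])
      then show ?thesis using S branch_minus[OF a(1)] by blast
    qed simp
    then show "?R\<^sup>*\<^sup>* S (kqr_branch r)"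
      using adj_branch[OF a(1)] by (rule rtranclp.rtrancl_into_rtrancl)
  qed
qed

lemma not_tar_adj_kqr_branch_minus:
  assumes "a < r" "b < r"
  shows "\<not> tar_adj (kqr_branch r - {Inl a}) (kqr_branch r - {Inl b})"
proof (cases "a = b")
  case False
  then have "((kqr_branch r - {Inl a}) - (kqr_branch r - {Inl b})) \<union>
      ((kqr_branch r - {Inl b}) - (kqr_branch r - {Inl a})) = {Inl b, Inl a}"
    using assms by (auto simp: kqr_branch_def)
  then show ?thesis using False by (simp add: tar_adj_def)
qed (simp add: tar_adj_def)

lemma not_tar_connected_kqr_below:
  assumes "2 \<le> r" "4 \<le> q" "k < r"
  shows "\<not> tar_connected (kqr_V r q) (kqr_E r q) k"
proof
  let ?X = "tar_vertices (kqr_V r q) (kqr_E r q) k"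
  assume connected: "tar_connected (kqr_V r q) (kqr_E r q) k"
  then obtain S where "S \<in> ?X" by (auto simp: tar_connected_def connected_on_def)
  then have "r - 1 \<le> card S" "card S \<le> k"
    using card_pds_kqr_ge[of r q S] assms by (simp_all add: tar_vertices_def)
  then have k: "k = r - 1" using assms(3) by linarith
  have branch_minus: "kqr_branch r - {Inl a} \<in> ?X" if "a < r" for a
    using power_dominating_set_kqr_branch_minus[of r q a] card_kqr_branch_minus[of a r] assms that k
    by (simp add: tar_vertices_def)
  have "\<not> tar_adj (kqr_branch r - {Inl 0}) S" if S: "S \<in> ?X" for S
  proof -
    obtain a where "a < r" "S = kqr_branch r - {Inl a}"
      using S pds_kqr_eq_branch_minus[of r q S] assms k by (auto simp: tar_vertices_def)
    then show ?thesis using not_tar_adj_kqr_branch_minus[of 0 r a] assms by simp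
  qed
  then have "kqr_branch r - {Inl 0} = kqr_branch r - {Inl 1}"
    using connected_on_isolated_eq[OF connected[unfolded tar_connected_def]]
      branch_minus[of 0] branch_minus[of 1] assms by simp
  moreover have "Inl 1 \<in> kqr_branch r - {Inl 0}" using assms by (simp add: kqr_branch_def)
  ultimately show False by simp
qed

lemma lower_pd0_kqr:
  assumes "2 \<le> r" "4 \<le> q"
  shows "lower_pd0 (kqr_V r q) (kqr_E r q) = r"
  unfolding lower_pd0_def
  using tar_connected_kqr[OF assms] not_tar_connected_kqr_below[OF assms]
  by (intro Least_equality) (auto simp: not_le[symmetric])

section \<open>A large minimal power dominating set\<close>

definition kqr_star :: "nat \<Rightarrow> (nat + nat \<times> nat \<times> nat) set" where
  "kqr_star r = (\<lambda>j. Inr (0, j, 0)) ` {1..<r}"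

lemma kqr_star_iff [simp]:
  "Inl c \<notin> kqr_star r"
  "Inr (i, j, t) \<in> kqr_star r \<longleftrightarrow> i = 0 \<and> t = 0 \<and> 1 \<le> j \<and> j < r"
  by (auto simp: kqr_star_def)

lemma power_dominating_set_kqr_subdiv_minus_star:
  assumes "2 \<le> r" "2 \<le> q"
  shows "power_dominating_set (kqr_V r q) (kqr_E r q) (kqr_subdiv r q - kqr_star r)"
proof (rule power_dominating_setI[where B = "kqr_V r q - kqr_star r"])
  let ?S = "kqr_subdiv r q - kqr_star r"
  show "kqr_V r q - kqr_star r \<subseteq> closed_nbhd_set (kqr_V r q) (kqr_E r q) ?S"
  proof
    fix x assume x: "x \<in> kqr_V r q - kqr_star r"
    show "x \<in> closed_nbhd_set (kqr_V r q) (kqr_E r q) ?S"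
    proof (cases x)
      case (Inl c)
      have "Inr (0, max c 1, 1) \<in> ?S" "kqr_E r q (Inr (0, max c 1, 1)) x"
        using x Inl assms by (auto simp: max_def)
      then show ?thesis using x unfolding closed_nbhd_set_def by blast
    next
      case (Inr p)
      then have "x \<in> ?S" using x by (auto simp: kqr_V_eq kqr_branch_def)
      then show ?thesis by (simp add: closed_nbhd_set_def)
    qed
  qed
  show "\<forall>w\<in>kqr_V r q - (kqr_V r q - kqr_star r). \<exists>u\<in>kqr_V r q - kqr_star r.
      open_nbhd (kqr_V r q) (kqr_E r q) u - (kqr_V r q - kqr_star r) = {w}"
  proof
    fix w assume "w \<in> kqr_V r q - (kqr_V r q - kqr_star r)"
    then obtain j where j: "w = Inr (0, j, 0)" "1 \<le> j" "j < r" by (auto simp: kqr_star_def)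
    \<comment> \<open>\<open>w\<close> is the only neighbour of \<open>Inl j\<close> in \<open>kqr_star r\<close>\<close>
    have "open_nbhd (kqr_V r q) (kqr_E r q) (Inl j) - (kqr_V r q - kqr_star r)
        = open_nbhd (kqr_V r q) (kqr_E r q) (Inl j) \<inter> kqr_star r"
      using open_nbhd_subset[of "kqr_V r q" "kqr_E r q" "Inl j"] by blast
    also have "\<dots> = {w}" using j assms by (auto simp: open_nbhd_def kqr_star_def)
    finally have "open_nbhd (kqr_V r q) (kqr_E r q) (Inl j) - (kqr_V r q - kqr_star r) = {w}" .
    moreover have "Inl j \<in> kqr_V r q - kqr_star r" using j by simp
    ultimately show "\<exists>u\<in>kqr_V r q - kqr_star r.
        open_nbhd (kqr_V r q) (kqr_E r q) u - (kqr_V r q - kqr_star r) = {w}"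
      by blast
  qed
qed (use finite_kqr_V in \<open>auto simp: kqr_V_eq\<close>)

lemma minimal_pds_kqr_subdiv_minus_star:
  assumes "2 \<le> r" "2 \<le> q"
  shows "minimal_pds (kqr_V r q) (kqr_E r q) (kqr_subdiv r q - kqr_star r)"
  unfolding minimal_pds_def
proof (intro conjI allI impI)
  show "power_dominating_set (kqr_V r q) (kqr_E r q) (kqr_subdiv r q - kqr_star r)"
    using assms by (rule power_dominating_set_kqr_subdiv_minus_star)
  fix T assume T: "T \<subset> kqr_subdiv r q - kqr_star r"
  then obtain x where x: "x \<in> kqr_subdiv r q - kqr_star r" "x \<notin> T" by blast
  then obtain i j t where x_eq: "x = Inr (i, j, t)" unfolding kqr_subdiv_def by blast
  with x have ijt: "i < j" "j < r" "t < q" "i \<noteq> 0 \<or> t \<noteq> 0" by auto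
  \<comment> \<open>\<open>T\<close> contains no branch vertex, so it observes only itself\<close>
  have observed: "closed_nbhd_set (kqr_V r q) (kqr_E r q) T \<inter> F = {}"
    if "F \<subseteq> Inr ` UNIV - T" for F
  proof -
    have "Inr p \<notin> closed_nbhd_set (kqr_V r q) (kqr_E r q) T" if "Inr p \<notin> T" for p
      using that T by (cases p) (auto simp: Inr_in_closed_nbhd_set_kqr_iff)
    then show ?thesis using \<open>F \<subseteq> Inr ` UNIV - T\<close> by blast
  qed
  have star: "Inr (0, c, 0) \<notin> T" for c using T by auto
  show "\<not> power_dominating_set (kqr_V r q) (kqr_E r q) T"
  proof (cases "i = 0")
    case True
    let ?F = "{Inr (0, j, 0), Inr (0, j, t)}"
    have "fort (kqr_V r q) (kqr_E r q) ?F" using ijt True by (auto simp: fort_def)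
    moreover have "closed_nbhd_set (kqr_V r q) (kqr_E r q) T \<inter> ?F = {}"
      using star x x_eq True by (intro observed) auto
    ultimately show ?thesis by (rule not_power_dominating_set_if_fort)
  next
    case False
    \<comment> \<open>each of \<open>Inl 0\<close>, \<open>Inl i\<close>, \<open>Inl j\<close> is adjacent to exactly two vertices of \<open>?F\<close>\<close>
    let ?F = "{Inr (i, j, t), Inr (0, i, 0), Inr (0, j, 0)}"
    have "fort (kqr_V r q) (kqr_E r q) ?F" using ijt False by (auto simp: fort_def)
    moreover have "closed_nbhd_set (kqr_V r q) (kqr_E r q) T \<inter> ?F = {}"
      using star x x_eq by (intro observed) auto
    ultimately show ?thesis by (rule not_power_dominating_set_if_fort)
  qed
qed

lemma card_kqr_subdiv_minus_star_less_pd0: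
  assumes "2 \<le> r" "4 \<le> q"
  shows "card (kqr_subdiv r q - kqr_star r) < pd0 (kqr_V r q) (kqr_E r q)"
proof (rule pd0_gt_if_not_tar_connected[OF finite_kqr_V],
       rule not_tar_connected_if_minimal_pds[OF finite_kqr_V])
  show minimal: "minimal_pds (kqr_V r q) (kqr_E r q) (kqr_subdiv r q - kqr_star r)"
    using assms by (intro minimal_pds_kqr_subdiv_minus_star) auto
  show "power_dominating_set (kqr_V r q) (kqr_E r q) (kqr_branch r - {Inl 0})"
    using assms by (intro power_dominating_set_kqr_branch_minus) auto
  have "power_dominating_set (kqr_V r q) (kqr_E r q) (kqr_subdiv r q - kqr_star r)"
    using minimal unfolding minimal_pds_def by blast
  then have "r - 1 \<le> card (kqr_subdiv r q - kqr_star r)"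
    using assms by (intro card_pds_kqr_ge) auto
  then show "card (kqr_branch r - {Inl 0}) \<le> card (kqr_subdiv r q - kqr_star r)"
    using card_kqr_branch_minus[of 0 r] assms by simp
  have "Inl 1 \<in> kqr_branch r - {Inl 0}" using assms by (simp add: kqr_branch_def)
  then show "kqr_branch r - {Inl 0} \<noteq> kqr_subdiv r q - kqr_star r"
    by (metis DiffD1 kqr_subdiv_iff(1))
qed

lemma card_less_pairs: "card {(i, j). i < j \<and> j < (r :: nat)} = r * (r - 1) div 2"
proof (induction r)
  case (Suc r)
  have "{(i, j). i < j \<and> j < Suc r} = {(i, j). i < j \<and> j < r} \<union> (\<lambda>i. (i, r)) ` {..<r}"
    by auto
  moreover have "finite {(i, j). i < j \<and> j < (r :: nat)}"
    by (rule finite_subset[of _ "{..<r} \<times> {..<r}"]) auto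
  moreover have "{(i, j). i < j \<and> j < r} \<inter> (\<lambda>i. (i, r)) ` {..<r} = {}" by auto
  ultimately have "card {(i, j). i < j \<and> j < Suc r} = r * (r - 1) div 2 + r"
    using Suc.IH by (simp add: card_Un_disjoint card_image inj_on_def)
  also have "\<dots> = Suc r * (Suc r - 1) div 2"
    by (cases r) (simp_all add: algebra_simps)
  finally show ?case .
qed simp

lemma card_kqr_subdiv: "card (kqr_subdiv r q) = r * (r - 1) div 2 * q"
proof -
  have "kqr_subdiv r q = (\<lambda>((i, j), t). Inr (i, j, t)) ` ({(i, j). i < j \<and> j < r} \<times> {..<q})"
    by (auto simp: kqr_subdiv_def) force
  then show ?thesis
    by (simp add: card_image inj_on_def card_cartesian_product card_less_pairs)
qed

lemma int_card_kqr_subdiv_minus_star: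
  assumes "1 \<le> r" "1 \<le> q"
  shows "int (card (kqr_subdiv r q - kqr_star r)) = int q * (int r * (int r - 1) div 2) - (int r - 1)"
proof -
  have sub: "kqr_star r \<subseteq> kqr_subdiv r q" using assms by (auto simp: kqr_star_def)
  have "card (kqr_star r) = r - 1" by (simp add: kqr_star_def card_image inj_on_def)
  moreover have "finite (kqr_subdiv r q)" using finite_kqr_V[of r q] by (simp add: kqr_V_eq)
  ultimately have "int (card (kqr_subdiv r q - kqr_star r)) = int (card (kqr_subdiv r q)) - int (r - 1)"
    using sub card_mono[of "kqr_subdiv r q" "kqr_star r"]
    by (simp add: card_Diff_subset finite_subset of_nat_diff)
  also have "\<dots> = int q * (int r * (int r - 1) div 2) - (int r - 1)"
    using assms by (simp add: card_kqr_subdiv of_nat_div of_nat_diff)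
  finally show ?thesis .
qed

lemma kqr_bound_gt:
  fixes r q :: int
  assumes "3 \<le> r" "4 \<le> q"
  shows "r < q * (r * (r - 1) div 2) - (r - 1) + 1"
proof -
  have "r * 2 \<le> r * (r - 1)" using assms(1) by (intro mult_left_mono) auto
  then have "r \<le> r * (r - 1) div 2" using zdiv_mono1[of "r * 2" "r * (r - 1)" 2] by simp
  then have "4 * r \<le> q * (r * (r - 1) div 2)" using assms by (intro mult_mono) auto
  then show ?thesis using assms by linarith
qed

theorem proposition3p10:
  fixes r q :: nat
  assumes "r \<ge> 3" and "q \<ge> 4"
  shows "power_domination_number (kqr_V r q) (kqr_E r q) = r - 1
       \<and> int (upper_power_domination_number (kqr_V r q) (kqr_E r q))
           \<ge> int q * (int r * (int r - 1) div 2) - (int r - 1)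
       \<and> lower_pd0 (kqr_V r q) (kqr_E r q) = r
       \<and> int (pd0 (kqr_V r q) (kqr_E r q))
           \<ge> int q * (int r * (int r - 1) div 2) - (int r - 1) + 1
       \<and> int q * (int r * (int r - 1) div 2) - (int r - 1) + 1 > int r"
proof -
  let ?V = "kqr_V r q" and ?E = "kqr_E r q" and ?S = "kqr_subdiv r q - kqr_star r"
  have r: "2 \<le> r" and q: "4 \<le> q" using assms by auto
  have minimal: "minimal_pds ?V ?E ?S"
    using r q by (intro minimal_pds_kqr_subdiv_minus_star) auto
  have card_S: "int (card ?S) = int q * (int r * (int r - 1) div 2) - (int r - 1)"
    using r q by (intro int_card_kqr_subdiv_minus_star) auto
  have "card ?S \<le> upper_power_domination_number ?V ?E"
    by (rule card_le_upper_power_domination_number[OF finite_kqr_V minimal])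
  moreover have "card ?S < pd0 ?V ?E" using r q by (rule card_kqr_subdiv_minus_star_less_pd0)
  ultimately show ?thesis
    using power_domination_number_kqr[OF r q] lower_pd0_kqr[OF r q] card_S
      kqr_bound_gt[of "int r" "int q"] assms
    by (intro conjI) linarith+
qed

end
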